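(* Let $M$ be a multiagent model, let $h\cdot s$ be a history of $M$ (so $\mathit{last}(h)\,T\,s$), let $\vec r$ be a record tuple that stops at $h$, let $a\in\mathit{Ag}$, $o\in\mathit{Obs}$ and $k\in\mathbb N$. Then $$\mathit{KT}^k(h\cdot s,\vec r)=U_T^k\big(\mathit{KT}^k(h,\vec r),\,s,\,\vec o(h,\vec r)\big)\quad\text{and}\quad \mathit{KT}^k\big(h,\vec r\cdot(o,|h|-1)_a\big)=U_\Delta^k\big(\mathit{KT}^k(h,\vec r),\,o,\,a\big).$$
   Context: Fix a countably infinite set $\mathit{AP}$ of atomic propositions, a finite nonempty set $\mathit{Obs}$ of observations, and a finite set of agents $\mathit{Ag}=\{a_1,\dots,a_m\}$. For a word $w$ we write $w_i$ for its letter at position $i$ (positions start at $0$), $|w|$ for its length (finite words) and $\mathit{last}(w)$ for its last letter. A multiagent model is $M=(\mathit{AP}_f,S,T,V,\{\sim_o\}_{o\in\mathit{Obs}},s_\iota,\vec o_\iota)$ where $\mathit{AP}_f\subseteq\mathit{AP}$ is finite, $S$ is a finite set of states, $T\subseteq S\times S$ is left-total, $V:S\to2^{\mathit{AP}_f}$, each $\sim_o$ is an equivalence relation on $S$, $s_\iota\in S$, and $\vec o_\iota=(\vec o_{\iota,a})_{a\in\mathit{Ag}}\in\mathit{Obs}^{\mathit{Ag}}$ gives each agent an initial observation. Paths are infinite sequences of states $s_0s_1\dots$ with $s_iTs_{i+1}$ (starting anywhere); histories are finite nonempty prefixes of paths. For a tuple $\vec o$, $\vec o_a$ is its $a$-component,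 $\vec o_i=\vec o_{a_i}$. An observation record is a finite word over $\mathit{Obs}\times\mathbb N$; $r_{=n}$ is the subword of $r$ consisting of the pairs with second component $n$; $r$ stops at $n$ if $r_{=m}$ is empty for all $m>n$. A record tuple is $\vec r=(\vec r_a)_{a\in\mathit{Ag}}$ of observation records; $\vec r\cdot(o,n)_a$ is $\vec r$ with $\vec r_a$ replaced by $\vec r_a\cdot(o,n)$; $\vec r$ stops at a history $h$ if each $\vec r_a$ stops at $|h|-1$. For agent $a$: $\mathit{ol}_a(\vec r,0)=\vec o_{\iota,a}\cdot o_1\cdots o_k$ if $(\vec r_a)_{=0}=(o_1,0)\cdots(o_k,0)$, and $\mathit{ol}_a(\vec r,n+1)=\mathit{last}(\mathit{ol}_a(\vec r,n))\cdot o_1\cdots o_k$ if $(\vec r_a)_{=n+1}=(o_1,n+1)\cdots(o_k,n+1)$. Histories $h,h'$ are equivalent for $a$, $h\approx^{\vec r}_a h'$, if $|h|=|h'|$ and for all $i<|h|$ and all $o$ occurring in $\mathit{ol}_a(\vec r,i)$, $h_i\sim_o h'_i$. $\vec o(h,\vec r)$ is the tuple whose $a$-component is the last element of $\mathit{ol}_a(\vec r,|h|-1)$. $k$-trees: a $0$-tree is $\langle s,\emptyset,\dots,\emptyset\rangle$ with $s\in S$; a $(k+1)$-tree is $\langle s,F_1,\dots,F_m\rangle$ with $s\in S$ and each $F_i$ a set of $k$-trees. The root of $\tau=\langle s,F_1,\dots,F_m\rangle$ is $\mathit{root}(\tau)=s$, and $\tau(a_i)=F_i$. For a history $h$ and record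 tuple $\vec r$: $\mathit{KT}^0(h,\vec r)=\langle\mathit{last}(h),\emptyset,\dots,\emptyset\rangle$ and $\mathit{KT}^{k+1}(h,\vec r)=\langle\mathit{last}(h),F_1,\dots,F_m\rangle$ with $F_i=\{\mathit{KT}^k(h',\vec r)\mid h'\text{ a history with }h'\approx^{\vec r}_{a_i}h\}$. Updates: $U_T^0(\langle s,\emptyset,\dots,\emptyset\rangle,s',\vec o)=\langle s',\emptyset,\dots,\emptyset\rangle$; $U_T^{k+1}(\langle s,F_1,\dots,F_m\rangle,s',\vec o)=\langle s',F'_1,\dots,F'_m\rangle$ where $F'_i=\{U_T^k(\tau,s'',\vec o)\mid\tau\in F_i,\ s''\sim_{\vec o_i}s',\ \mathit{root}(\tau)\,T\,s''\}$. $U_\Delta^0(\langle s,\emptyset,\dots,\emptyset\rangle,o,a_i)=\langle s,\emptyset,\dots,\emptyset\rangle$; $U_\Delta^{k+1}(\langle s,F_1,\dots,F_m\rangle,o,a_i)=\langle s,F'_1,\dots,F'_m\rangle$ where $F'_j=\{U_\Delta^k(\tau,o,a_i)\mid\tau\in F_j\}$ for $j\ne i$ and $F'_i=\{U_\Delta^k(\tau,o,a_i)\mid\tau\in F_i,\ \mathit{root}(\tau)\sim_o s\}$. *)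

theory Defs
  imports Main "HOL-Library.FSet"
begin

text \<open>Agents are a_1..a_m, represented by the indices 0..<m (index i stands for a_(i+1)).
  Atomic propositions are represented by nat (a countably infinite set).\<close>

record ('s, 'o) mamodel =
  nagents :: nat
  Obs :: "'o set"
  APf :: "nat set"
  St :: "'s set"
  Tr :: "('s \<times> 's) set"
  Val :: "'s \<Rightarrow> nat set"
  obsrel :: "'o \<Rightarrow> ('s \<times> 's) set"
  init_state :: 's
  init_obs :: "nat \<Rightarrow> 'o"

definition wf_model :: "('s, 'o) mamodel \<Rightarrow> bool" where
  "wf_model M \<longleftrightarrow>
     finite (Obs M) \<and> Obs M \<noteq> {} \<and> finite (APf M) \<and> finite (St M) \<and>
     Tr M \<subseteq> St M \<times> St M \<and> (\<forall>s\<in>St M. \<exists>s'. (s, s') \<in> Tr M) \<and>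
     (\<forall>s\<in>St M. Val M s \<subseteq> APf M) \<and>
     (\<forall>ob\<in>Obs M. equiv (St M) (obsrel M ob)) \<and>
     init_state M \<in> St M \<and> (\<forall>i<nagents M. init_obs M i \<in> Obs M)"

definition is_history :: "('s, 'o) mamodel \<Rightarrow> 's list \<Rightarrow> bool" where
  "is_history M h \<longleftrightarrow> h \<noteq> [] \<and> set h \<subseteq> St M \<and>
     (\<forall>i. Suc i < length h \<longrightarrow> (h ! i, h ! Suc i) \<in> Tr M)"

type_synonym 'o obsrec = "('o \<times> nat) list"
type_synonym 'o rectuple = "nat \<Rightarrow> 'o obsrec"

definition rec_at :: "'o obsrec \<Rightarrow> nat \<Rightarrow> 'o obsrec" where
  "rec_at r n = filter (\<lambda>p. snd p = n) r"

definition rec_stops :: "'o obsrec \<Rightarrow> nat \<Rightarrow> bool" where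
  "rec_stops r n \<longleftrightarrow> (\<forall>m>n. rec_at r m = [])"

definition valid_rectuple :: "('s, 'o) mamodel \<Rightarrow> 'o rectuple \<Rightarrow> bool" where
  "valid_rectuple M r \<longleftrightarrow> (\<forall>a<nagents M. fst ` set (r a) \<subseteq> Obs M)"

definition tuple_stops_at :: "('s, 'o) mamodel \<Rightarrow> 'o rectuple \<Rightarrow> 's list \<Rightarrow> bool" where
  "tuple_stops_at M r h \<longleftrightarrow> (\<forall>a<nagents M. rec_stops (r a) (length h - 1))"

definition rec_snoc :: "'o rectuple \<Rightarrow> 'o \<Rightarrow> nat \<Rightarrow> nat \<Rightarrow> 'o rectuple" where
  "rec_snoc r ob n a = r(a := r a @ [(ob, n)])"

primrec ol :: "('s, 'o) mamodel \<Rightarrow> 'o rectuple \<Rightarrow> nat \<Rightarrow> nat \<Rightarrow> 'o list" where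
  "ol M r a 0 = init_obs M a # map fst (rec_at (r a) 0)"
| "ol M r a (Suc n) = last (ol M r a n) # map fst (rec_at (r a) (Suc n))"

definition hist_equiv :: "('s, 'o) mamodel \<Rightarrow> 'o rectuple \<Rightarrow> nat \<Rightarrow> 's list \<Rightarrow> 's list \<Rightarrow> bool" where
  "hist_equiv M r a h h' \<longleftrightarrow> length h = length h' \<and>
     (\<forall>i<length h. \<forall>ob\<in>set (ol M r a i). (h ! i, h' ! i) \<in> obsrel M ob)"

definition obs_vec :: "('s, 'o) mamodel \<Rightarrow> 's list \<Rightarrow> 'o rectuple \<Rightarrow> nat \<Rightarrow> 'o" where
  "obs_vec M h r = (\<lambda>a. last (ol M r a (length h - 1)))"

text \<open>Trees <s, F_1, ..., F_m>: the list has the m components F_1..F_m.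
  Over a finite state set all the sets F_i occurring are finite, hence fsets.\<close>
datatype 's ktree = Node 's "'s ktree fset list"

primrec root :: "'s ktree \<Rightarrow> 's" where
  "root (Node s Fs) = s"

primrec kids :: "'s ktree \<Rightarrow> 's ktree fset list" where
  "kids (Node s Fs) = Fs"

primrec KT :: "('s, 'o) mamodel \<Rightarrow> nat \<Rightarrow> 's list \<Rightarrow> 'o rectuple \<Rightarrow> 's ktree" where
  "KT M 0 h r = Node (last h) (replicate (nagents M) {||})"
| "KT M (Suc k) h r = Node (last h)
     (map (\<lambda>i. Abs_fset {KT M k h' r | h'. is_history M h' \<and> hist_equiv M r i h' h})
          [0..<nagents M])"

primrec UT :: "('s, 'o) mamodel \<Rightarrow> nat \<Rightarrow> 's ktree \<Rightarrow> 's \<Rightarrow> (nat \<Rightarrow> 'o) \<Rightarrow> 's ktree" where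
  "UT M 0 \<tau> s' ov = Node s' (replicate (nagents M) {||})"
| "UT M (Suc k) \<tau> s' ov = Node s'
     (map (\<lambda>i. Abs_fset {UT M k \<sigma> s'' ov | \<sigma> s''. \<sigma> |\<in>| kids \<tau> ! i \<and>
                 (s'', s') \<in> obsrel M (ov i) \<and> (root \<sigma>, s'') \<in> Tr M})
          [0..<nagents M])"

primrec UD :: "('s, 'o) mamodel \<Rightarrow> nat \<Rightarrow> 's ktree \<Rightarrow> 'o \<Rightarrow> nat \<Rightarrow> 's ktree" where
  "UD M 0 \<tau> ob a = Node (root \<tau>) (replicate (nagents M) {||})"
| "UD M (Suc k) \<tau> ob a = Node (root \<tau>)
     (map (\<lambda>j. if j = a
               then (\<lambda>\<sigma>. UD M k \<sigma> ob a) |`| ffilter (\<lambda>\<sigma>. (root \<sigma>, root \<tau>) \<in> obsrel M ob) (kids \<tau> ! j)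
               else (\<lambda>\<sigma>. UD M k \<sigma> ob a) |`| (kids \<tau> ! j))
          [0..<nagents M])"

end

theory Submission
  imports Defs
begin

text \<open>For agent i, the histories equivalent to h\<cdot>s are exactly the
  extensions h'\<cdot>x of histories h' equivalent to h by a transition to some x \<sim>_o s, where o
  is the current observation of i: because the record stops at h, the observation list at the
  new position consists of o alone. Recording o for agent a at the last position changes no
  equivalence of another agent, and for a it adds exactly the condition last h' \<sim>_o last h.\<close>

lemma fmember_Abs_fset: "finite A \<Longrightarrow> x |\<in>| Abs_fset A \<longleftrightarrow> x \<in> A"
  by (simp add: Abs_fset_inverse)

lemma fimage_Abs_fset: "finite A \<Longrightarrow> f |`| Abs_fset A = Abs_fset (f ` A)"
  by (simp add: fset_inject[symmetric] Abs_fset_inverse fimage.rep_eq)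

lemma ffilter_Abs_fset: "finite A \<Longrightarrow> ffilter P (Abs_fset A) = Abs_fset {x \<in> A. P x}"
  by (auto simp: fset_inject[symmetric] Abs_fset_inverse ffilter.rep_eq)

definition equiv_histories :: "('s, 'o) mamodel \<Rightarrow> 'o rectuple \<Rightarrow> nat \<Rightarrow> 's list \<Rightarrow> 's list set" where
  "equiv_histories M r i h = {h'. is_history M h' \<and> hist_equiv M r i h' h}"

lemma length_equiv_histories: "h' \<in> equiv_histories M r i h \<Longrightarrow> length h' = length h"
  by (simp add: equiv_histories_def hist_equiv_def)

lemma finite_equiv_histories:
  assumes "finite (St M)"
  shows "finite (equiv_histories M r i h)"
proof (rule finite_subset)
  show "equiv_histories M r i h \<subseteq> {h'. set h' \<subseteq> St M \<and> length h' = length h}"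
    by (auto simp: equiv_histories_def is_history_def hist_equiv_def)
  show "finite {h'. set h' \<subseteq> St M \<and> length h' = length h}"
    using finite_lists_length_eq[OF assms] .
qed

lemma root_KT [simp]: "root (KT M k h r) = last h"
  by (cases k) auto

lemma KT_Suc_equiv_histories:
  "KT M (Suc k) h r =
     Node (last h) (map (\<lambda>i. Abs_fset ((\<lambda>h'. KT M k h' r) ` equiv_histories M r i h)) [0..<nagents M])"
proof -
  have "{KT M k h' r | h'. is_history M h' \<and> hist_equiv M r i h' h} =
      (\<lambda>h'. KT M k h' r) ` equiv_histories M r i h" for i
    by (auto simp: equiv_histories_def)
  then show ?thesis by simp
qed

lemma nth_kids_KT_Suc:
  "i < nagents M \<Longrightarrow>
    kids (KT M (Suc k) h r) ! i = Abs_fset ((\<lambda>h'. KT M k h' r) ` equiv_histories M r i h)"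
  unfolding KT_Suc_equiv_histories by simp

lemma fmember_kids_KT_Suc:
  assumes "finite (St M)" and "i < nagents M"
  shows "\<sigma> |\<in>| kids (KT M (Suc k) h r) ! i \<longleftrightarrow> \<sigma> \<in> (\<lambda>h'. KT M k h' r) ` equiv_histories M r i h"
  unfolding nth_kids_KT_Suc[OF assms(2)]
  by (simp add: fmember_Abs_fset finite_equiv_histories[OF assms(1)])

lemma is_history_conv_successively:
  "is_history M h \<longleftrightarrow> h \<noteq> [] \<and> set h \<subseteq> St M \<and> successively (\<lambda>x y. (x, y) \<in> Tr M) h"
  by (simp add: is_history_def successively_conv_nth)

lemma is_history_snoc:
  assumes "Tr M \<subseteq> St M \<times> St M" and "h \<noteq> []"
  shows "is_history M (h @ [x]) \<longleftrightarrow> is_history M h \<and> (last h, x) \<in> Tr M"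
  using assms by (auto simp: is_history_conv_successively successively_append_iff)

lemma hist_equiv_snoc:
  assumes "length h' = length h"
  shows "hist_equiv M r i (h' @ [x]) (h @ [y]) \<longleftrightarrow>
    hist_equiv M r i h' h \<and> (\<forall>ob \<in> set (ol M r i (length h)). (x, y) \<in> obsrel M ob)"
  using assms by (auto simp: hist_equiv_def nth_append less_Suc_eq)

lemma ol_after_stop:
  assumes "tuple_stops_at M r h" and "i < nagents M" and "h \<noteq> []"
  shows "ol M r i (length h) = [obs_vec M h r i]"
proof -
  obtain n where n: "length h = Suc n" using assms(3) by (cases h) auto
  then have "rec_at (r i) (Suc n) = []"
    using assms(1,2) by (simp add: tuple_stops_at_def rec_stops_def)
  with n show ?thesis by (simp add: obs_vec_def)
qed

lemma equiv_histories_snoc: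
  assumes "Tr M \<subseteq> St M \<times> St M" and "tuple_stops_at M r h" and "i < nagents M" and "h \<noteq> []"
  shows "equiv_histories M r i (h @ [s]) =
    {h' @ [x] | h' x. h' \<in> equiv_histories M r i h \<and>
       (last h', x) \<in> Tr M \<and> (x, s) \<in> obsrel M (obs_vec M h r i)}"
    (is "?L = ?R")
proof
  show "?L \<subseteq> ?R"
  proof
    fix h'' assume h'': "h'' \<in> ?L"
    then have "length h'' = Suc (length h)" by (simp add: length_equiv_histories)
    then obtain h' x where "h'' = h' @ [x]" and len: "length h' = length h"
      by (metis append_butlast_last_id length_butlast diff_Suc_1 list.size(3) nat.distinct(1))
    moreover from len assms(4) have "h' \<noteq> []" by auto
    ultimately show "h'' \<in> ?R"
      using h'' assms(1) len ol_after_stop[OF assms(2-4)]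
      by (simp add: equiv_histories_def is_history_snoc hist_equiv_snoc)
  qed
  show "?R \<subseteq> ?L"
  proof clarify
    fix h' x
    assume "h' \<in> equiv_histories M r i h" and "(last h', x) \<in> Tr M"
      and "(x, s) \<in> obsrel M (obs_vec M h r i)"
    moreover from this(1) have "length h' = length h" by (rule length_equiv_histories)
    moreover from this assms(4) have "h' \<noteq> []" by auto
    ultimately show "h' @ [x] \<in> ?L"
      using assms(1) ol_after_stop[OF assms(2-4)]
      by (simp add: equiv_histories_def is_history_snoc hist_equiv_snoc)
  qed
qed

theorem KT_snoc_eq_UT:
  assumes "Tr M \<subseteq> St M \<times> St M" and "finite (St M)"
    and "is_history M (h @ [s])" and "h \<noteq> []" and "tuple_stops_at M r h"
  shows "KT M k (h @ [s]) r = UT M k (KT M k h r) s (obs_vec M h r)"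
  using assms(3-5)
proof (induction k arbitrary: h s)
  case 0
  show ?case by simp
next
  case (Suc k)
  let ?ov = "obs_vec M h r"
  have children: "(\<lambda>h'. KT M k h' r) ` equiv_histories M r i (h @ [s]) =
      {UT M k \<sigma> x ?ov | \<sigma> x. \<sigma> |\<in>| kids (KT M (Suc k) h r) ! i \<and>
         (x, s) \<in> obsrel M (?ov i) \<and> (root \<sigma>, x) \<in> Tr M}"
    if i: "i < nagents M" for i
  proof -
    have IH: "KT M k (h' @ [x]) r = UT M k (KT M k h' r) x ?ov"
      if "h' \<in> equiv_histories M r i h" and "(last h', x) \<in> Tr M" for h' x
    proof -
      have len: "length h' = length h" using that(1) by (rule length_equiv_histories)
      with Suc.prems(2) have "h' \<noteq> []" by auto
      moreover from this that assms(1) have "is_history M (h' @ [x])"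
        by (simp add: equiv_histories_def is_history_snoc)
      moreover from len Suc.prems(3) have "tuple_stops_at M r h'"
        by (simp add: tuple_stops_at_def)
      moreover from len have "obs_vec M h' r = ?ov" by (simp add: obs_vec_def)
      ultimately show ?thesis using Suc.IH by metis
    qed
    have "(\<lambda>h'. KT M k h' r) ` equiv_histories M r i (h @ [s]) =
        {KT M k (h' @ [x]) r | h' x. h' \<in> equiv_histories M r i h \<and>
           (last h', x) \<in> Tr M \<and> (x, s) \<in> obsrel M (?ov i)}"
      unfolding equiv_histories_snoc[OF assms(1) Suc.prems(3) i Suc.prems(2)] by blast
    also have "\<dots> = {UT M k (KT M k h' r) x ?ov | h' x. h' \<in> equiv_histories M r i h \<and>
           (last h', x) \<in> Tr M \<and> (x, s) \<in> obsrel M (?ov i)}"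
      by (intro Collect_cong ex_cong1) (use IH in auto)
    also have "\<dots> = {UT M k \<sigma> x ?ov | \<sigma> x. \<sigma> |\<in>| kids (KT M (Suc k) h r) ! i \<and>
         (x, s) \<in> obsrel M (?ov i) \<and> (root \<sigma>, x) \<in> Tr M}"
      unfolding fmember_kids_KT_Suc[OF assms(2) i] by force
    finally show ?thesis .
  qed
  show ?case
    unfolding KT_Suc_equiv_histories[of M k "h @ [s]"] UT.simps last_snoc
    using children by simp
qed

lemma ol_rec_snoc_other: "b \<noteq> a \<Longrightarrow> ol M (rec_snoc r ob n a) b m = ol M r b m"
  by (induction m) (simp_all add: rec_snoc_def)

lemma ol_rec_snoc_before: "m < n \<Longrightarrow> ol M (rec_snoc r ob n a) a m = ol M r a m"
  by (induction m) (simp_all add: rec_snoc_def rec_at_def)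

lemma set_ol_rec_snoc_at: "set (ol M (rec_snoc r ob n a) a n) = insert ob (set (ol M r a n))"
proof (cases n)
  case 0
  then show ?thesis by (auto simp: rec_snoc_def rec_at_def)
next
  case (Suc m)
  then have "ol M (rec_snoc r ob n a) a m = ol M r a m" by (simp add: ol_rec_snoc_before)
  with Suc show ?thesis by (auto simp: rec_snoc_def rec_at_def)
qed

lemma hist_equiv_rec_snoc_other:
  "b \<noteq> a \<Longrightarrow> hist_equiv M (rec_snoc r ob n a) b h' h \<longleftrightarrow> hist_equiv M r b h' h"
  by (simp add: hist_equiv_def ol_rec_snoc_other)

lemma hist_equiv_rec_snoc_self:
  assumes "length h' = Suc n" and "length h = Suc n"
  shows "hist_equiv M (rec_snoc r ob n a) a h' h \<longleftrightarrow>
    hist_equiv M r a h' h \<and> (last h', last h) \<in> obsrel M ob"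
proof -
  from assms have "last h' = h' ! n" and "last h = h ! n"
    by (metis diff_Suc_1 last_conv_nth list.size(3) nat.distinct(1))+
  with assms show ?thesis
    by (auto simp: hist_equiv_def less_Suc_eq ol_rec_snoc_before set_ol_rec_snoc_at)
qed

lemma equiv_histories_rec_snoc_other:
  "b \<noteq> a \<Longrightarrow> equiv_histories M (rec_snoc r ob n a) b h = equiv_histories M r b h"
  by (simp add: equiv_histories_def hist_equiv_rec_snoc_other)

lemma equiv_histories_rec_snoc_self:
  assumes "length h = Suc n"
  shows "equiv_histories M (rec_snoc r ob n a) a h =
    {h' \<in> equiv_histories M r a h. (last h', last h) \<in> obsrel M ob}"
proof -
  have "hist_equiv M (rec_snoc r ob n a) a h' h \<longleftrightarrow>
      hist_equiv M r a h' h \<and> (last h', last h) \<in> obsrel M ob" for h'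
  proof (cases "length h' = Suc n")
    case True
    then show ?thesis by (rule hist_equiv_rec_snoc_self[OF _ assms])
  next
    case False
    with assms have "length h' \<noteq> length h" by simp
    then show ?thesis unfolding hist_equiv_def by blast
  qed
  then show ?thesis by (auto simp: equiv_histories_def)
qed

theorem KT_rec_snoc_eq_UD:
  assumes "finite (St M)" and "length h = Suc n"
  shows "KT M k h (rec_snoc r ob n a) = UD M k (KT M k h r) ob a"
  using assms(2)
proof (induction k arbitrary: h)
  case 0
  show ?case by simp
next
  case (Suc k)
  let ?r' = "rec_snoc r ob n a"
  let ?E = "\<lambda>j. equiv_histories M r j h"
  have IH: "KT M k h' ?r' = UD M k (KT M k h' r) ob a" if "h' \<in> ?E j" for h' j
    using Suc.IH Suc.prems length_equiv_histories[OF that] by simp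
  have fin: "finite ((\<lambda>h'. KT M k h' r) ` ?E j)" for j
    using finite_equiv_histories[OF assms(1)] by blast
  have children: "Abs_fset ((\<lambda>h'. KT M k h' ?r') ` equiv_histories M ?r' j h) =
      (if j = a
       then (\<lambda>\<sigma>. UD M k \<sigma> ob a) |`| ffilter (\<lambda>\<sigma>. (root \<sigma>, last h) \<in> obsrel M ob)
              (kids (KT M (Suc k) h r) ! j)
       else (\<lambda>\<sigma>. UD M k \<sigma> ob a) |`| (kids (KT M (Suc k) h r) ! j))"
    if j: "j < nagents M" for j
  proof (cases "j = a")
    case True
    have "(\<lambda>h'. KT M k h' ?r') ` equiv_histories M ?r' a h =
        (\<lambda>\<sigma>. UD M k \<sigma> ob a) ` {\<sigma> \<in> (\<lambda>h'. KT M k h' r) ` ?E a. (root \<sigma>, last h) \<in> obsrel M ob}"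
      unfolding equiv_histories_rec_snoc_self[OF Suc.prems] using IH by force
    with True fin show ?thesis
      unfolding nth_kids_KT_Suc[OF j] by (simp add: ffilter_Abs_fset fimage_Abs_fset)
  next
    case False
    have "(\<lambda>h'. KT M k h' ?r') ` equiv_histories M ?r' j h =
        (\<lambda>\<sigma>. UD M k \<sigma> ob a) ` (\<lambda>h'. KT M k h' r) ` ?E j"
      unfolding equiv_histories_rec_snoc_other[OF False] image_image using IH by simp
    with False fin show ?thesis
      unfolding nth_kids_KT_Suc[OF j] by (simp add: fimage_Abs_fset)
  qed
  show ?case
    unfolding KT_Suc_equiv_histories[of M k h ?r'] UD.simps root_KT
    using children by simp
qed

theorem mainTheorem5:
  fixes M :: "('s, 'o) mamodel" and h :: "'s list" and s :: 's
    and r :: "'o rectuple" and a :: nat and ob :: 'o and k :: nat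
  assumes "wf_model M"
    and "is_history M (h @ [s])" and "h \<noteq> []"
    and "valid_rectuple M r"
    and "tuple_stops_at M r h"
    and "a < nagents M" and "ob \<in> Obs M"
  shows "KT M k (h @ [s]) r = UT M k (KT M k h r) s (obs_vec M h r)
    \<and> KT M k h (rec_snoc r ob (length h - 1) a) = UD M k (KT M k h r) ob a"
proof
  from assms(1) have Tr: "Tr M \<subseteq> St M \<times> St M" and fin: "finite (St M)"
    by (simp_all add: wf_model_def)
  show "KT M k (h @ [s]) r = UT M k (KT M k h r) s (obs_vec M h r)"
    using KT_snoc_eq_UT[OF Tr fin assms(2,3,5)] .
  from assms(3) have "length h = Suc (length h - 1)" by simp
  with fin show "KT M k h (rec_snoc r ob (length h - 1) a) = UD M k (KT M k h r) ob a"
    by (rule KT_rec_snoc_eq_UD)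
qed

end
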